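(* There is an absolute constant $c>0$ such that every sufficiently large positive integer $N$ can be written as $N=n_1+n_2$ with positive integers $n_1,n_2$ satisfying $F(n_i)\ge c\log N$ for $i=1,2$.
   Context: For a positive integer $n$, $F(n)$ denotes the distance from $n$ to the nearest prime number. *)

theory Defs
  imports Complex_Main "HOL-Computational_Algebra.Primes"
begin

definition F :: "nat \<Rightarrow> nat" where
  "F n = (LEAST d. \<exists>p. prime p \<and> d = nat \<bar>int n - int p\<bar>)"

end

theory Submission
  imports
    Defs
    "HOL-Number_Theory.Cong"
    "HOL-Library.FuncSet"
    "HOL-Analysis.Harmonic_Numbers"
    "HOL-Real_Asymp.Real_Asymp"
begin

text \<open>Take \<open>z \<approx> \<surd>(log N)\<close> and \<open>K = z\<^sup>2\<close>. If \<open>n\<^sub>1\<close> lies, for every \<open>|j| \<le> K\<close>, in the class of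
  \<open>-j\<close> modulo some small prime and in the class of \<open>N + j\<close> modulo some small prime, then every
  \<open>n\<^sub>1 + j\<close> and every \<open>n\<^sub>2 + j\<close>, where \<open>n\<^sub>2 = N - n\<^sub>1\<close>, is composite. Modulo each prime \<open>p \<le> z\<close>
  pick, greedily, the class containing most of the \<open>2(2K+1)\<close> targets not yet covered; since
  \<open>\<Prod>(1 - 1/p) \<le> 1 / log z\<close> over these primes, only \<open>O(z\<^sup>2 / log z)\<close> targets survive, and each
  survivor gets a class modulo its own prime in \<open>(z, 32z\<^sup>2]\<close>, of which Chebyshev's bound provides
  enough. The product of all the primes used is \<open>exp (O(z\<^sup>2))\<close>, so the Chinese remainder theorem
  yields a suitable \<open>n\<^sub>1 < N\<close>.\<close>

section \<open>Chebyshev's lower bound for the prime counting function\<close>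

lemma self_less_power:
  fixes p n :: nat
  assumes "1 < p"
  shows "n < p ^ n"
proof -
  have "n < 2 ^ n" by (rule less_exp)
  also have "\<dots> \<le> p ^ n" using assms by (simp add: power_mono)
  finally show ?thesis .
qed

lemma multiplicity_eq_card_prime_power_dvd:
  fixes p m :: nat
  assumes p: "prime p" and m: "0 < m"
  shows "multiplicity p m = card {i\<in>{1..m}. p ^ i dvd m}"
proof -
  let ?v = "multiplicity p m"
  have "p ^ ?v \<le> m" using m by (simp add: dvd_imp_le multiplicity_dvd)
  then have "?v \<le> m" using self_less_power[OF prime_gt_1_nat[OF p], of ?v] by linarith
  moreover have "p ^ i dvd m" if "i \<le> ?v" for i
    using that by (meson dvd_trans le_imp_power_dvd multiplicity_dvd)
  moreover have "i \<le> ?v" if "p ^ i dvd m" for i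
    using that m p by (auto intro: multiplicity_geI)
  ultimately have "{i\<in>{1..m}. p ^ i dvd m} = {1..?v}" by auto
  then show ?thesis by simp
qed

lemma multiplicity_fact:
  fixes p :: nat
  assumes p: "prime p"
  shows "multiplicity p (fact n :: nat) = (\<Sum>i\<in>{1..n}. n div p ^ i)"
proof (induction n)
  case 0
  then show ?case by simp
next
  case (Suc n)
  have p1: "1 < p" using prime_gt_1_nat[OF p] .
  have "(fact (Suc n) :: nat) = Suc n * fact n" by simp
  then have "multiplicity p (fact (Suc n) :: nat) = multiplicity p (Suc n) + multiplicity p (fact n :: nat)"
    using p by (simp only:) (rule prime_elem_multiplicity_mult_distrib, auto)
  moreover have "multiplicity p (Suc n) = (\<Sum>i\<in>{1..Suc n}. Suc n div p ^ i - n div p ^ i)"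
  proof -
    have "multiplicity p (Suc n) = (\<Sum>i\<in>{1..Suc n}. if p ^ i dvd Suc n then 1 else 0)"
      using multiplicity_eq_card_prime_power_dvd[OF p, of "Suc n"]
      by (simp only: card_eq_sum sum.inter_filter[OF finite_atLeastAtMost] zero_less_Suc)
    also have "\<dots> = (\<Sum>i\<in>{1..Suc n}. Suc n div p ^ i - n div p ^ i)"
      using p1 by (intro sum.cong) (simp_all add: div_Suc dvd_eq_mod_eq_0)
    finally show ?thesis .
  qed
  moreover have "(\<Sum>i\<in>{1..n}. n div p ^ i) = (\<Sum>i\<in>{1..Suc n}. n div p ^ i)"
    using self_less_power[OF p1, of "Suc n"] by simp
  moreover have "(\<Sum>i\<in>{1..Suc n}. Suc n div p ^ i - n div p ^ i) + (\<Sum>i\<in>{1..Suc n}. n div p ^ i)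
      = (\<Sum>i\<in>{1..Suc n}. Suc n div p ^ i)"
    by (subst sum.distrib[symmetric], intro sum.cong) (simp_all add: div_le_mono)
  ultimately show ?case using Suc.IH by simp
qed

lemma double_div_bounds:
  fixes n q :: nat
  shows "2 * (n div q) \<le> 2 * n div q" and "2 * n div q \<le> 2 * (n div q) + 1"
proof -
  have "2 * n div q = 2 * (n div q) + 2 * (n mod q) div q \<and> 2 * (n mod q) div q < 2"
  proof (cases "q = 0")
    case False
    have "2 * n = 2 * (n mod q + n div q * q)"
      by simp
    then have "2 * n = 2 * (n mod q) + 2 * (n div q) * q"
      by (simp only: add_mult_distrib2 mult.assoc)
    then show ?thesis
      using False by (simp add: div_less_iff_less_mult)
  qed simp
  then show "2 * (n div q) \<le> 2 * n div q" and "2 * n div q \<le> 2 * (n div q) + 1"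
    by simp_all
qed

lemma multiplicity_central_binomial:
  fixes p n :: nat
  assumes p: "prime p"
  shows "multiplicity p ((2 * n) choose n) = (\<Sum>i\<in>{1..2 * n}. 2 * n div p ^ i - 2 * (n div p ^ i))"
proof -
  have p1: "1 < p" using prime_gt_1_nat[OF p] .
  have "fact n * fact n * ((2 * n) choose n) = (fact (2 * n) :: nat)"
    using binomial_fact_lemma[of n "2 * n"] by simp
  then have "2 * multiplicity p (fact n :: nat) + multiplicity p ((2 * n) choose n)
      = multiplicity p (fact (2 * n) :: nat)"
    using p by (metis prime_elem_multiplicity_mult_distrib prime_imp_prime_elem binomial_eq_0_iff
        fact_nonzero mult_2 not_less le_add2 mult_eq_0_iff)
  moreover have "(\<Sum>i\<in>{1..n}. n div p ^ i) = (\<Sum>i\<in>{1..2 * n}. n div p ^ i)"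
  proof (rule sum.mono_neutral_left)
    have "n div p ^ i = 0" if "n < i" for i
      using self_less_power[OF p1, of i] that by simp
    then show "\<forall>i\<in>{1..2 * n} - {1..n}. n div p ^ i = 0" by auto
  qed auto
  moreover have "(\<Sum>i\<in>{1..2 * n}. 2 * n div p ^ i)
      = (\<Sum>i\<in>{1..2 * n}. 2 * n div p ^ i - 2 * (n div p ^ i)) + 2 * (\<Sum>i\<in>{1..2 * n}. n div p ^ i)"
    by (simp add: sum_distrib_left sum.distrib[symmetric] double_div_bounds(1))
  ultimately show ?thesis
    using multiplicity_fact[OF p, of n] multiplicity_fact[OF p, of "2 * n"] by simp
qed

lemma prime_power_multiplicity_central_binomial_le:
  fixes p n :: nat
  assumes p: "prime p" and n: "0 < n"
  shows "p ^ multiplicity p ((2 * n) choose n) \<le> 2 * n"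
proof (rule ccontr)
  have p1: "1 < p" using prime_gt_1_nat[OF p] .
  let ?v = "multiplicity p ((2 * n) choose n)"
  let ?I = "{i\<in>{1..2 * n}. p ^ i \<le> 2 * n}"
  assume "\<not> p ^ ?v \<le> 2 * n"
  then have big: "2 * n < p ^ ?v" by simp
  then have "1 \<le> ?v" using n by (cases "?v = 0") simp_all
  have "?v \<le> (\<Sum>i\<in>{1..2 * n}. if p ^ i \<le> 2 * n then 1 else 0)"
    unfolding multiplicity_central_binomial[OF p]
  proof (rule sum_mono)
    fix i
    show "2 * n div p ^ i - 2 * (n div p ^ i) \<le> (if p ^ i \<le> 2 * n then 1 else 0)"
    proof (cases "p ^ i \<le> 2 * n")
      case True
      then show ?thesis using double_div_bounds(2)[of n "p ^ i"] by simp
    next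
      case False
      then have "2 * n div p ^ i = 0" by (intro div_less) simp
      then show ?thesis by simp
    qed
  qed
  also have "\<dots> = card ?I" by (simp only: card_eq_sum sum.inter_filter[OF finite_atLeastAtMost])
  also have "\<dots> \<le> card {1..<?v}"
  proof (rule card_mono)
    show "?I \<subseteq> {1..<?v}"
    proof
      fix i assume i: "i \<in> ?I"
      then have "p ^ i < p ^ ?v" using big by auto
      then have "i < ?v" by (rule power_less_imp_less_exp[OF p1])
      then show "i \<in> {1..<?v}" using i by simp
    qed
  qed simp
  finally show False using \<open>1 \<le> ?v\<close> by simp
qed

lemma central_binomial_le_power_prime_count:
  fixes n :: nat
  assumes n: "0 < n"
  shows "(2 * n) choose n \<le> (2 * n) ^ card {p. prime p \<and> p \<le> 2 * n}"
proof -
  let ?C = "(2 * n) choose n"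
  let ?P = "{p. prime p \<and> p \<le> 2 * n}"
  have "?C dvd fact (2 * n)"
    using binomial_fact_lemma[of n "2 * n"] by (metis dvd_triv_right le_add2 mult_2)
  then have "prime_factors ?C \<subseteq> ?P"
    by (auto simp: in_prime_factors_iff prime_dvd_fact_iff[symmetric] intro: dvd_trans)
  moreover have "finite ?P" by (rule finite_subset[of _ "{..2 * n}"]) auto
  ultimately have "card (prime_factors ?C) \<le> card ?P" by (rule card_mono[rotated])
  have "?C = (\<Prod>p\<in>prime_factors ?C. p ^ multiplicity p ?C)"
    using prime_factorization_nat[of ?C] by simp
  also have "\<dots> \<le> (2 * n) ^ card ?P"
    using prime_power_multiplicity_central_binomial_le n \<open>card (prime_factors ?C) \<le> card ?P\<close>
    by (intro prod_le_power) auto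
  finally show ?thesis .
qed

lemma prime_count_lower_bound:
  fixes n :: nat
  assumes n: "0 < n"
  shows "real n * ln 2 \<le> real (card {p. prime p \<and> p \<le> 2 * n}) * ln (2 * real n)"
proof -
  have "(2::real) ^ n = (real (2 * n) / real n) ^ n" using n by simp
  also have "\<dots> \<le> real ((2 * n) choose n)" by (rule binomial_ge_n_over_k_pow_k) simp
  also have "\<dots> \<le> real ((2 * n) ^ card {p. prime p \<and> p \<le> 2 * n})"
    using central_binomial_le_power_prime_count[OF n] by (simp only: of_nat_le_iff)
  also have "\<dots> = (2 * real n) ^ card {p. prime p \<and> p \<le> 2 * n}" by simp
  finally have "ln ((2::real) ^ n) \<le> ln ((2 * real n) ^ card {p. prime p \<and> p \<le> 2 * n})"
    using n by (subst ln_le_cancel_iff) auto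
  then show ?thesis by (simp only: ln_realpow)
qed

lemma card_primes_le_self: "card {p::nat. prime p \<and> p \<le> z} \<le> z"
proof -
  have "{p::nat. prime p \<and> p \<le> z} \<subseteq> {1..z}" by (auto dest: prime_gt_0_nat)
  then show ?thesis using card_mono[of "{1..z}"] by fastforce
qed

section \<open>An upper bound for the sieve density\<close>

definition sieve_density :: "nat \<Rightarrow> real" where
  "sieve_density z = (\<Prod>p\<in>{p. prime p \<and> p \<le> z}. 1 - 1 / real p)"

lemma sum_inverse_powers_le:
  fixes q :: real
  assumes "1 < q"
  shows "(\<Sum>k<m. (1 / q) ^ k) \<le> q / (q - 1)"
proof -
  have "(\<Sum>k<m. (1 / q) ^ k) = (1 - (1 / q) ^ m) / (1 - 1 / q)"
    using assms by (simp add: sum_gp_strict)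
  also have "\<dots> \<le> 1 / (1 - 1 / q)" using assms by (intro divide_right_mono) auto
  also have "\<dots> = q / (q - 1)" using assms by (simp add: field_simps)
  finally show ?thesis .
qed

lemma smooth_numbers_insert_subset:
  fixes q X :: nat
  assumes q: "prime q"
  shows "{n\<in>{1..X}. prime_factors n \<subseteq> insert q Q}
    \<subseteq> (\<lambda>(k, m). q ^ k * m) ` ({..<Suc X} \<times> {n\<in>{1..X}. prime_factors n \<subseteq> Q})"
proof
  fix n assume nD: "n \<in> {n\<in>{1..X}. prime_factors n \<subseteq> insert q Q}"
  then have n: "0 < n" "n \<le> X" by auto
  have q1: "1 < q" using prime_gt_1_nat[OF q] .
  obtain m where nm: "n = q ^ multiplicity q n * m" "\<not> q dvd m"
    by (rule multiplicity_decompose'[of n q]) (use n q1 in auto)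
  let ?k = "multiplicity q n"
  have "q ^ ?k \<le> n" using n(1) by (simp add: dvd_imp_le multiplicity_dvd)
  then have "?k < Suc X" using self_less_power[OF q1, of ?k] n(2) by linarith
  moreover have "0 < m" using nm n by (cases m) auto
  moreover have "m \<le> n" using nm n by (metis dvd_imp_le dvd_triv_right)
  moreover have "prime_factors m \<subseteq> Q"
  proof
    fix p assume p: "p \<in> prime_factors m"
    then have "prime p" "p dvd m" by auto
    then have "p dvd n" using nm(1) by (metis dvd_mult)
    with \<open>prime p\<close> have "p \<in> insert q Q" using nD n by (auto simp: in_prime_factors_iff)
    moreover have "p \<noteq> q" using p nm(2) by auto
    ultimately show "p \<in> Q" by simp
  qed
  ultimately have "(?k, m) \<in> {..<Suc X} \<times> {n\<in>{1..X}. prime_factors n \<subseteq> Q}" using n by auto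
  then show "n \<in> (\<lambda>(k, m). q ^ k * m) ` ({..<Suc X} \<times> {n\<in>{1..X}. prime_factors n \<subseteq> Q})"
    using nm(1) by force
qed

lemma sum_inverse_smooth_le_euler_product:
  fixes Q :: "nat set" and X :: nat
  assumes "finite Q" "\<forall>p\<in>Q. prime p"
  shows "(\<Sum>n\<in>{n\<in>{1..X}. prime_factors n \<subseteq> Q}. 1 / real n) \<le> (\<Prod>p\<in>Q. real p / (real p - 1))"
  using assms
proof (induction Q rule: finite_induct)
  case empty
  have "{n\<in>{1..X}. prime_factors n \<subseteq> {}} \<subseteq> {1}"
    by (auto simp: prime_factorization_empty_iff)
  then have "(\<Sum>n\<in>{n\<in>{1..X}. prime_factors n \<subseteq> {}}. 1 / real n) \<le> (\<Sum>n\<in>{1}. 1 / real n)"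
    by (intro sum_mono2) auto
  then show ?case by simp
next
  case (insert q Q)
  have q1: "1 < q" using insert prime_gt_1_nat by auto
  let ?D = "\<lambda>Q. {n\<in>{1..X}. prime_factors n \<subseteq> Q}"
  let ?f = "\<lambda>(k, m). q ^ k * m"
  have "?D (insert q Q) \<subseteq> ?f ` ({..<Suc X} \<times> ?D Q)"
    using insert.prems by (intro smooth_numbers_insert_subset) simp
  then have "(\<Sum>n\<in>?D (insert q Q). 1 / real n) \<le> (\<Sum>n\<in>?f ` ({..<Suc X} \<times> ?D Q). 1 / real n)"
    by (intro sum_mono2 finite_imageI) auto
  also have "\<dots> \<le> (\<Sum>km\<in>{..<Suc X} \<times> ?D Q. 1 / real (?f km))"
    using sum_image_le[of "{..<Suc X} \<times> ?D Q" "\<lambda>n. 1 / real n" ?f] by (simp add: o_def)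
  also have "\<dots> = (\<Sum>k<Suc X. \<Sum>m\<in>?D Q. (1 / real q) ^ k * (1 / real m))"
    by (subst sum.cartesian_product) (auto intro!: sum.cong simp: power_one_over split: prod.splits)
  also have "\<dots> = (\<Sum>k<Suc X. (1 / real q) ^ k) * (\<Sum>m\<in>?D Q. 1 / real m)"
    by (simp only: sum_product)
  also have "\<dots> \<le> (real q / (real q - 1)) * (\<Prod>p\<in>Q. real p / (real p - 1))"
    using insert q1 by (intro mult_mono sum_nonneg sum_inverse_powers_le) auto
  also have "\<dots> = (\<Prod>p\<in>insert q Q. real p / (real p - 1))"
    using insert by simp
  finally show ?case .
qed

lemma ln_le_euler_product:
  fixes z :: nat
  shows "ln (real z + 1) \<le> (\<Prod>p\<in>{p. prime p \<and> p \<le> z}. real p / (real p - 1))"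
proof -
  have "{1..z} = {n\<in>{1..z}. prime_factors n \<subseteq> {p. prime p \<and> p \<le> z}}"
    by (auto simp: in_prime_factors_iff intro: order.trans[OF dvd_imp_le])
  then have "harm z = (\<Sum>n\<in>{n\<in>{1..z}. prime_factors n \<subseteq> {p. prime p \<and> p \<le> z}}. 1 / real n)"
    by (simp add: harm_def divide_inverse)
  also have "\<dots> \<le> (\<Prod>p\<in>{p. prime p \<and> p \<le> z}. real p / (real p - 1))"
    by (rule sum_inverse_smooth_le_euler_product) (auto intro: finite_subset[of _ "{..z}"])
  finally show ?thesis using ln_le_harm[of z] by linarith
qed

lemma sieve_density_nonneg: "0 \<le> sieve_density z"
  unfolding sieve_density_def by (intro prod_nonneg) (auto simp: divide_le_eq)

lemma sieve_density_le_inverse_ln: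
  fixes z :: nat
  assumes "1 \<le> z"
  shows "sieve_density z \<le> 1 / ln (real z + 1)"
proof -
  let ?P = "{p. prime p \<and> p \<le> z}"
  have "sieve_density z = (\<Prod>p\<in>?P. inverse (real p / (real p - 1)))"
    unfolding sieve_density_def
    by (intro prod.cong) (auto simp: field_simps dest!: prime_gt_1_nat)
  also have "\<dots> = inverse (\<Prod>p\<in>?P. real p / (real p - 1))"
    by (simp only: prod_inversef[symmetric] comp_def)
  also have "\<dots> \<le> inverse (ln (real z + 1))"
    using ln_le_euler_product[of z] assms by (intro le_imp_inverse_le) auto
  finally show ?thesis by (simp add: divide_inverse)
qed

section \<open>Covering finitely many points by residue classes\<close>

lemma pigeonhole_fibre:
  fixes f :: "'a \<Rightarrow> 'b"
  assumes fin: "finite R" and card: "card (f ` R) \<le> p"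
  shows "\<exists>b. card R \<le> p * card {e\<in>R. f e = b}"
proof (cases "R = {}")
  case False
  have "f \<in> R \<rightarrow> f ` R" by auto
  then obtain b where b: "card R \<le> card (f -` {b} \<inter> R) * card (f ` R)"
    using pigeonhole_card[of f R "f ` R"] fin False by auto
  have "f -` {b} \<inter> R = {e\<in>R. f e = b}" by auto
  with b have "card R \<le> card {e\<in>R. f e = b} * card (f ` R)" by simp
  also have "\<dots> \<le> card {e\<in>R. f e = b} * p" using card by (rule mult_le_mono2)
  finally show ?thesis by (auto simp: mult.commute)
qed simp

text \<open>The greedy step: modulo each \<open>p \<in> P\<close> choose the class met by the most surviving points.\<close>

lemma greedy_residue_sieve:
  fixes U :: "'e set" and r :: "nat \<Rightarrow> 'e \<Rightarrow> 'b"
  assumes "finite P" "finite U" "\<forall>p\<in>P. 0 < p \<and> card (r p ` U) \<le> p"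
  shows "\<exists>a. real (card {e\<in>U. \<forall>p\<in>P. r p e \<noteq> a p}) \<le> real (card U) * (\<Prod>p\<in>P. 1 - 1 / real p)"
  using assms
proof (induction P rule: finite_induct)
  case empty
  then show ?case by simp
next
  case (insert p P)
  then obtain a where a: "real (card {e\<in>U. \<forall>q\<in>P. r q e \<noteq> a q}) \<le> real (card U) * (\<Prod>q\<in>P. 1 - 1 / real q)"
    by auto
  let ?R = "{e\<in>U. \<forall>q\<in>P. r q e \<noteq> a q}"
  have finR: "finite ?R" using insert by simp
  have p: "0 < p" "card (r p ` U) \<le> p" using insert.prems(2) by auto
  have "card (r p ` ?R) \<le> card (r p ` U)"
    using insert.prems(1) by (intro card_mono) auto
  then have "card (r p ` ?R) \<le> p" using p(2) by linarith
  then obtain b where b: "card ?R \<le> p * card {e\<in>?R. r p e = b}"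
    using pigeonhole_fibre[OF finR] by blast
  let ?K = "{e\<in>?R. r p e = b}"
  have "{e\<in>U. \<forall>q\<in>insert p P. r q e \<noteq> (a(p := b)) q} = ?R - ?K"
    using insert(2) by auto
  moreover have "?K \<subseteq> ?R" by auto
  then have "card (?R - ?K) = card ?R - card ?K" "card ?K \<le> card ?R"
    using finR by (simp_all add: card_Diff_subset card_mono finite_subset)
  ultimately have "real (card {e\<in>U. \<forall>q\<in>insert p P. r q e \<noteq> (a(p := b)) q})
      = real (card ?R) - real (card ?K)"
    by (simp add: of_nat_diff)
  also have "\<dots> \<le> real (card ?R) * (1 - 1 / real p)"
    using b p(1) by (simp add: field_simps flip: of_nat_mult)
  also have "\<dots> \<le> real (card U) * (\<Prod>q\<in>P. 1 - 1 / real q) * (1 - 1 / real p)"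
    using a p(1) by (intro mult_right_mono) auto
  also have "\<dots> = real (card U) * (\<Prod>q\<in>insert p P. 1 - 1 / real q)"
    using insert(1,2) by simp
  finally show ?case by blast
qed

text \<open>Points left over by the greedy step are covered one prime each.\<close>

lemma residue_covering:
  fixes U :: "'e set" and r :: "nat \<Rightarrow> 'e \<Rightarrow> 'b"
  assumes "finite P1" "finite U" "P1 \<inter> P2 = {}" "\<forall>p\<in>P1. 0 < p \<and> card (r p ` U) \<le> p"
    and enough: "real (card U) * (\<Prod>p\<in>P1. 1 - 1 / real p) \<le> real (card P2)"
  shows "\<exists>a Q. Q \<subseteq> P2 \<and> real (card Q) \<le> real (card U) * (\<Prod>p\<in>P1. 1 - 1 / real p)
           \<and> (\<forall>e\<in>U. \<exists>p\<in>P1 \<union> Q. r p e = a p)"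
proof -
  obtain a1 where a1: "real (card {e\<in>U. \<forall>p\<in>P1. r p e \<noteq> a1 p}) \<le> real (card U) * (\<Prod>p\<in>P1. 1 - 1 / real p)"
    using greedy_residue_sieve[OF assms(1,2,4)] by blast
  let ?R = "{e\<in>U. \<forall>p\<in>P1. r p e \<noteq> a1 p}"
  have "card ?R \<le> card P2" using a1 enough by linarith
  then obtain Q where Q: "Q \<subseteq> P2" "card Q = card ?R" "finite Q"
    by (rule obtain_subset_with_card_n)
  moreover have "finite ?R" using assms(2) by simp
  ultimately obtain g where g: "bij_betw g Q ?R"
    using finite_same_card_bij by blast
  define a where "a = (\<lambda>p. if p \<in> P1 then a1 p else r p (g p))"
  have cover: "\<exists>p\<in>P1 \<union> Q. r p e = a p" if "e \<in> U" for e
  proof (cases "e \<in> ?R")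
    case True
    then have "e \<in> g ` Q" using g by (simp add: bij_betw_def)
    then obtain p where "p \<in> Q" "e = g p" by blast
    moreover have "p \<notin> P1" using \<open>p \<in> Q\<close> Q(1) assms(3) by blast
    ultimately show ?thesis unfolding a_def by auto
  next
    case False
    then obtain p where "p \<in> P1" "r p e = a1 p" using \<open>e \<in> U\<close> by blast
    then show ?thesis unfolding a_def by auto
  qed
  have "real (card Q) \<le> real (card U) * (\<Prod>p\<in>P1. 1 - 1 / real p)" using Q(2) a1 by simp
  with Q(1) cover show ?thesis by blast
qed

lemma chinese_remainder_primes:
  fixes S :: "nat set" and a :: "nat \<Rightarrow> nat"
  assumes "finite S" "\<forall>p\<in>S. prime p"
  shows "\<exists>x. \<forall>n. [n = x] (mod \<Prod>S) \<longrightarrow> (\<forall>p\<in>S. [n = a p] (mod p))"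
proof -
  have "coprime p q" if "p \<in> S" "q \<in> S" "p \<noteq> q" for p q
    using that assms(2) by (simp add: primes_coprime)
  then obtain x where x: "\<forall>p\<in>S. [x = a p] (mod p)"
    using chinese_remainder_nat[OF assms(1), of id a] by auto
  have "[n = a p] (mod p)" if "[n = x] (mod \<Prod>S)" "p \<in> S" for n p
  proof -
    have "p dvd \<Prod>S" using assms(1) that(2) by (rule dvd_prodI)
    with that(1) have "[n = x] (mod p)" by (rule cong_dvd_modulus_nat)
    then show ?thesis using x that(2) by (simp add: cong_trans)
  qed
  then show ?thesis by blast
qed

lemma covering_by_prime_residues:
  fixes T :: "int set" and z y B :: nat
  assumes "finite T"
    and enough: "real (card T) * sieve_density z \<le> real (card {p. prime p \<and> z < p \<and> p \<le> y})"
    and B: "real (card T) * sieve_density z \<le> real B"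
  shows "\<exists>a Q. Q \<subseteq> {p. prime p \<and> z < p \<and> p \<le> y} \<and> card Q \<le> B \<and>
           (\<forall>t\<in>T. \<exists>p\<in>{p. prime p \<and> p \<le> z} \<union> Q. [int (a p) = t] (mod int p))"
proof -
  define P1 where "P1 = {p. prime p \<and> p \<le> z}"
  define P2 where "P2 = {p. prime p \<and> z < p \<and> p \<le> y}"
  define r where "r = (\<lambda>p t. nat (t mod int p))"
  have density: "sieve_density z = (\<Prod>p\<in>P1. 1 - 1 / real p)"
    by (simp add: sieve_density_def P1_def)
  have finP1: "finite P1" unfolding P1_def by (rule finite_subset[of _ "{..z}"]) auto
  have "card (r p ` T) \<le> p" if "p \<in> P1" for p
  proof -
    have "r p ` T \<subseteq> {..<p}"
      using that prime_gt_0_nat by (auto simp: r_def P1_def nat_less_iff)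
    then show ?thesis using card_mono[of "{..<p}"] by fastforce
  qed
  then have "\<forall>p\<in>P1. 0 < p \<and> card (r p ` T) \<le> p"
    by (auto simp: P1_def prime_gt_0_nat)
  moreover have "P1 \<inter> P2 = {}" by (auto simp: P1_def P2_def)
  ultimately obtain a Q where Q: "Q \<subseteq> P2" "real (card Q) \<le> real (card T) * sieve_density z"
      and cover: "\<forall>t\<in>T. \<exists>p\<in>P1 \<union> Q. r p t = a p"
    using residue_covering[OF finP1 \<open>finite T\<close>, of P2 r] enough
    unfolding density P2_def by blast
  have "real (card Q) \<le> real B" using Q(2) B by linarith
  then have "card Q \<le> B" by (simp only: of_nat_le_iff)
  moreover have "[int (a p) = t] (mod int p)" if "p \<in> P1 \<union> Q" "r p t = a p" for p t
  proof -
    have "0 < p" using that(1) Q(1) prime_gt_0_nat by (auto simp: P1_def P2_def)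
    then have "int (a p) = t mod int p" unfolding that(2)[symmetric] r_def by simp
    then show ?thesis unfolding Cong.cong_def by simp
  qed
  then have "\<forall>t\<in>T. \<exists>p\<in>P1 \<union> Q. [int (a p) = t] (mod int p)" using cover by blast
  ultimately show ?thesis using Q(1) unfolding P1_def[symmetric] P2_def[symmetric] by blast
qed

lemma sieving_modulus:
  fixes T :: "int set" and z y B :: nat
  assumes "finite T" "1 \<le> z" "z \<le> y"
    and enough: "real (card T) * sieve_density z \<le> real (card {p. prime p \<and> z < p \<and> p \<le> y})"
    and B: "real (card T) * sieve_density z \<le> real B"
  shows "\<exists>M x. 0 < M \<and> M \<le> z ^ z * y ^ B \<and>
           (\<forall>n. [n = x] (mod M) \<longrightarrow> (\<forall>t\<in>T. \<exists>p. prime p \<and> p \<le> y \<and> int p dvd int n - t))"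
proof -
  define P1 where "P1 = {p. prime p \<and> p \<le> z}"
  obtain a Q where Q: "Q \<subseteq> {p. prime p \<and> z < p \<and> p \<le> y}" "card Q \<le> B"
      and cover: "\<forall>t\<in>T. \<exists>p\<in>P1 \<union> Q. [int (a p) = t] (mod int p)"
    using covering_by_prime_residues[OF \<open>finite T\<close> enough B] unfolding P1_def by blast
  define S where "S = P1 \<union> Q"
  have finP1: "finite P1" unfolding P1_def by (rule finite_subset[of _ "{..z}"]) auto
  have finQ: "finite Q" using Q(1) by (rule finite_subset) auto
  have S: "prime p" "p \<le> y" if "p \<in> S" for p
    using that Q(1) \<open>z \<le> y\<close> by (auto simp: S_def P1_def)
  obtain x where x: "\<And>n. [n = x] (mod \<Prod>S) \<Longrightarrow> \<forall>p\<in>S. [n = a p] (mod p)"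
    using chinese_remainder_primes[of S a] finP1 finQ S(1) unfolding S_def by blast
  have "\<Prod>P1 \<le> z ^ z"
    using \<open>1 \<le> z\<close> card_primes_le_self[of z] by (intro prod_le_power) (auto simp: P1_def)
  moreover have "\<Prod>Q \<le> y ^ B"
    using Q \<open>1 \<le> z\<close> \<open>z \<le> y\<close> by (intro prod_le_power) auto
  moreover have "\<Prod>S = \<Prod>P1 * \<Prod>Q"
    unfolding S_def using Q(1) finP1 finQ by (intro prod.union_disjoint) (auto simp: P1_def)
  ultimately have "\<Prod>S \<le> z ^ z * y ^ B" by (simp add: mult_le_mono)
  moreover have "0 < \<Prod>S" using S(1) prime_gt_0_nat by (simp add: prod_pos)
  moreover have "\<exists>p. prime p \<and> p \<le> y \<and> int p dvd int n - t" if n: "[n = x] (mod \<Prod>S)" and t: "t \<in> T" for n t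
  proof -
    obtain p where p: "p \<in> S" "[int (a p) = t] (mod int p)" using cover t unfolding S_def by blast
    have "[n = a p] (mod p)" using x n p(1) by blast
    then have "[int n = int (a p)] (mod int p)" by (simp add: cong_int_iff)
    then have "[int n = t] (mod int p)" using p(2) by (rule cong_trans)
    then show ?thesis using p(1) S by (auto simp: cong_iff_dvd_diff)
  qed
  ultimately show ?thesis by blast
qed

section \<open>Two summands far from all primes\<close>

lemma F_gt_if_neighbours_have_small_factors:
  fixes n K y :: nat
  assumes "y + K < n"
    and small: "\<forall>j\<in>{-int K..int K}. \<exists>p. prime p \<and> p \<le> y \<and> int p dvd int n + j"
  shows "K < F n"
proof -
  have "\<exists>d p. prime p \<and> d = nat \<bar>int n - int p\<bar>" using two_is_prime_nat by blast
  from LeastI_ex[OF this] obtain q where q: "prime q" "F n = nat \<bar>int n - int q\<bar>"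
    unfolding F_def by blast
  show ?thesis
  proof (rule ccontr)
    assume "\<not> K < F n"
    then have "int q - int n \<in> {-int K..int K}" using q(2) by auto
    then obtain p where p: "prime p" "p \<le> y" "int p dvd int q"
      using small by fastforce
    then have "p dvd q" by simp
    moreover have "p < q" using p(2) \<open>int q - int n \<in> _\<close> assms(1) by auto
    ultimately show False using q(1) p(1) by (metis prime_nat_iff not_prime_1 order.irrefl)
  qed
qed

lemma exists_in_residue_class_between:
  fixes M L N x :: nat
  assumes "0 < M" "(L + 1) * M + L \<le> N"
  shows "\<exists>n. [n = x] (mod M) \<and> L \<le> n \<and> n + L \<le> N"
proof (intro exI conjI)
  show "[x mod M + L * M = x] (mod M)" by (simp add: Cong.cong_def)
  show "L \<le> x mod M + L * M" using assms(1) by (simp add: trans_le_add2)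
  have "x mod M + L * M < (L + 1) * M" using assms(1) by simp
  then show "x mod M + L * M + L \<le> N" using assms(2) by linarith
qed

lemma decomposition_far_from_primes:
  fixes z y K B N :: nat
  assumes "1 \<le> z" "z \<le> y"
    and enough: "real (2 * (2 * K + 1)) * sieve_density z \<le> real (card {p. prime p \<and> z < p \<and> p \<le> y})"
    and B: "real (2 * (2 * K + 1)) * sieve_density z \<le> real B"
    and N: "(y + K + 2) * (z ^ z * y ^ B) + (y + K + 1) \<le> N"
  shows "\<exists>n1 n2. 0 < n1 \<and> 0 < n2 \<and> N = n1 + n2 \<and> K < F n1 \<and> K < F n2"
proof -
  define J where "J = {-int K..int K}"
  define T where "T = uminus ` J \<union> (\<lambda>j. int N + j) ` J"
  have "card T \<le> 2 * (2 * K + 1)"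
    unfolding T_def J_def by (rule order.trans[OF card_Un_le]) (simp add: card_image_le)
  then have "real (card T) * sieve_density z \<le> real (2 * (2 * K + 1)) * sieve_density z"
    by (intro mult_right_mono sieve_density_nonneg) simp
  then obtain M x where M: "0 < M" "M \<le> z ^ z * y ^ B"
      and covered: "\<And>n. [n = x] (mod M) \<Longrightarrow> \<forall>t\<in>T. \<exists>p. prime p \<and> p \<le> y \<and> int p dvd int n - t"
    using sieving_modulus[of T z y B] assms unfolding T_def J_def by (auto simp del: of_nat_mult)
  define L where "L = y + K + 1"
  have "(L + 1) * M \<le> (y + K + 2) * (z ^ z * y ^ B)"
    using M(2) unfolding L_def by (intro mult_le_mono) simp_all
  then obtain n1 where n1: "[n1 = x] (mod M)" "L \<le> n1" "n1 + L \<le> N"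
    using exists_in_residue_class_between[OF M(1), of L N x] N unfolding L_def by auto
  define n2 where "n2 = N - n1"
  have n12: "L \<le> n1" "L \<le> n2" "N = n1 + n2" "int n2 = int N - int n1"
    and cov: "\<forall>t\<in>T. \<exists>p. prime p \<and> p \<le> y \<and> int p dvd int n1 - t"
    using n1 covered unfolding n2_def by auto
  have shifts: "\<exists>p. prime p \<and> p \<le> y \<and> int p dvd int n1 + j"
      "\<exists>p. prime p \<and> p \<le> y \<and> int p dvd int n2 + j" if "j \<in> {-int K..int K}" for j
  proof -
    have "-j \<in> T" "int N + j \<in> T" using that unfolding T_def J_def by blast+
    with cov obtain p q where p: "prime p" "p \<le> y" "int p dvd int n1 - - j"
        and q: "prime q" "q \<le> y" "int q dvd int n1 - (int N + j)"
      by blast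
    have "int n2 + j = - (int n1 - (int N + j))" using n12(4) by simp
    then have "int q dvd int n2 + j" using q(3) by (simp only: dvd_minus_iff)
    with p q show "\<exists>p. prime p \<and> p \<le> y \<and> int p dvd int n1 + j"
      "\<exists>p. prime p \<and> p \<le> y \<and> int p dvd int n2 + j" by auto
  qed
  have "K < F n1"
    by (rule F_gt_if_neighbours_have_small_factors[where y = y]) (use n12(1) shifts(1) in \<open>auto simp: L_def\<close>)
  moreover have "K < F n2"
    by (rule F_gt_if_neighbours_have_small_factors[where y = y]) (use n12(2) shifts(2) in \<open>auto simp: L_def\<close>)
  ultimately show ?thesis using n12 unfolding L_def by (intro exI[of _ n1] exI[of _ n2]) auto
qed

section \<open>Choice of the parameters\<close>

lemma eventually_many_primes_above:
  "eventually (\<lambda>z. (4 * real z ^ 2 + 2) / ln (real z + 1)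
     \<le> real (card {p. prime p \<and> z < p \<and> p \<le> 32 * z ^ 2})) sequentially"
proof -
  have "eventually (\<lambda>z::nat. (4 * real z ^ 2 + 2) / ln (real z + 1)
     \<le> 16 * real z ^ 2 * (2 / 3) / ln (32 * real z ^ 2) - real z) sequentially"
    by real_asymp
  then show ?thesis
  proof (rule eventually_mono)
    fix z :: nat
    assume asymp: "(4 * real z ^ 2 + 2) / ln (real z + 1) \<le> 16 * real z ^ 2 * (2 / 3) / ln (32 * real z ^ 2) - real z"
    let ?A = "{p. prime p \<and> p \<le> 32 * z ^ 2}" and ?B = "{p. prime p \<and> p \<le> z}"
    have "16 * real z ^ 2 * (2 / 3) / ln (32 * real z ^ 2) \<le> real (card ?A)"
    proof (cases "z = 0")
      case False
      have "16 * real z ^ 2 * (2 / 3) \<le> 16 * real z ^ 2 * ln 2"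
        using ln2_ge_two_thirds by (intro mult_left_mono) auto
      also have "\<dots> \<le> real (card ?A) * ln (32 * real z ^ 2)"
        using prime_count_lower_bound[of "16 * z ^ 2"] False by simp
      finally have "16 * real z ^ 2 * (2 / 3) \<le> real (card ?A) * ln (32 * real z ^ 2)" .
      moreover have "1 \<le> real z ^ 2" using False by (simp add: one_le_power)
      then have "0 < ln (32 * real z ^ 2)" by (intro ln_gt_zero) linarith
      ultimately show ?thesis by (simp add: divide_le_eq)
    qed simp
    moreover have "real (card ?B) \<le> real z"
      using card_primes_le_self[of z] by simp
    moreover have "?B \<subseteq> ?A" "finite ?A"
      by (cases z; auto simp: power2_eq_square intro: finite_subset[of _ "{..32 * z ^ 2}"])+
    then have "card {p. prime p \<and> z < p \<and> p \<le> 32 * z ^ 2} = card ?A - card ?B" "card ?B \<le> card ?A"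
      by (auto simp: card_Diff_subset[symmetric] finite_subset card_mono intro!: arg_cong[of _ _ card])
    ultimately show "(4 * real z ^ 2 + 2) / ln (real z + 1) \<le> real (card {p. prime p \<and> z < p \<and> p \<le> 32 * z ^ 2})"
      using asymp by (simp add: of_nat_diff)
  qed
qed

lemma real_power_le_exp:
  fixes y B :: nat
  assumes "1 \<le> y" "real B \<le> c"
  shows "real (y ^ B) \<le> exp (c * ln (real y))"
proof -
  have "0 < real y" using assms(1) by simp
  then have "real (y ^ B) = exp (real B * ln (real y))"
    by (simp add: exp_of_nat_mult)
  also have "\<dots> \<le> exp (c * ln (real y))"
    using assms by (simp add: mult_right_mono)
  finally show ?thesis .
qed

lemma nat_bound_le_of_exp_bound:
  fixes z y K B N :: nat
  assumes "1 \<le> z" "1 \<le> y" "real B \<le> c"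
    and "(real y + real K + 2) * (exp (real z * ln (real z)) * exp (c * ln (real y)))
      + real y + real K + 1 \<le> real N"
  shows "(y + K + 2) * (z ^ z * y ^ B) + (y + K + 1) \<le> N"
proof -
  have "real (z ^ z * y ^ B) \<le> exp (real z * ln (real z)) * exp (c * ln (real y))"
    using real_power_le_exp[of z z "real z"] real_power_le_exp[of y B c] assms(1-3)
    by (simp add: mult_mono)
  then have "(real y + real K + 2) * real (z ^ z * y ^ B)
      \<le> (real y + real K + 2) * (exp (real z * ln (real z)) * exp (c * ln (real y)))"
    by (rule mult_left_mono) simp
  moreover have "real ((y + K + 2) * (z ^ z * y ^ B) + (y + K + 1))
      = (real y + real K + 2) * real (z ^ z * y ^ B) + real y + real K + 1"
    by (simp add: algebra_simps)
  ultimately have "real ((y + K + 2) * (z ^ z * y ^ B) + (y + K + 1)) \<le> real N"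
    using assms(4) by linarith
  then show ?thesis by (simp only: of_nat_le_iff)
qed

lemma eventually_decomposition_far_from_primes:
  "eventually (\<lambda>z. \<forall>N. exp (10 * real z ^ 2) \<le> real N \<longrightarrow>
     (\<exists>n1 n2. 0 < n1 \<and> 0 < n2 \<and> N = n1 + n2 \<and> z ^ 2 < F n1 \<and> z ^ 2 < F n2)) sequentially"
proof -
  have "eventually (\<lambda>z::nat. (32 * real z ^ 2 + real z ^ 2 + 2) * (exp (real z * ln (real z))
      * exp (((4 * real z ^ 2 + 2) / ln (real z + 1) + 1) * ln (32 * real z ^ 2)))
      + 32 * real z ^ 2 + real z ^ 2 + 1 \<le> exp (10 * real z ^ 2)) sequentially"
    by real_asymp
  with eventually_many_primes_above eventually_ge_at_top[of 1]
  show ?thesis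
  proof (eventually_elim, intro allI impI)
    fix z N :: nat
    define W where "W = (4 * real z ^ 2 + 2) / ln (real z + 1)"
    define B where "B = nat \<lceil>W\<rceil>"
    assume z: "1 \<le> z" and many: "W \<le> real (card {p. prime p \<and> z < p \<and> p \<le> 32 * z ^ 2})"
      and size: "(32 * real z ^ 2 + real z ^ 2 + 2)
          * (exp (real z * ln (real z)) * exp ((W + 1) * ln (32 * real z ^ 2)))
        + 32 * real z ^ 2 + real z ^ 2 + 1 \<le> exp (10 * real z ^ 2)"
      and N: "exp (10 * real z ^ 2) \<le> real N"
    have "real (2 * (2 * z ^ 2 + 1)) = 4 * real z ^ 2 + 2" by simp
    then have "real (2 * (2 * z ^ 2 + 1)) * sieve_density z \<le> (4 * real z ^ 2 + 2) * (1 / ln (real z + 1))"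
      using sieve_density_le_inverse_ln[OF z] by (simp only:) (rule mult_left_mono, simp_all)
    then have "real (2 * (2 * z ^ 2 + 1)) * sieve_density z \<le> W"
      unfolding W_def by simp
    moreover have "0 \<le> W" unfolding W_def by (intro divide_nonneg_nonneg) auto
    then have B: "W \<le> real B" "real B \<le> W + 1" unfolding B_def by linarith+
    moreover note B(1)
    moreover have "(32 * z ^ 2 + z ^ 2 + 2) * (z ^ z * (32 * z ^ 2) ^ B) + (32 * z ^ 2 + z ^ 2 + 1) \<le> N"
      using size N z B(2)
      by (intro nat_bound_le_of_exp_bound[where c = "W + 1"]) (simp_all add: one_le_power)
    ultimately show "\<exists>n1 n2. 0 < n1 \<and> 0 < n2 \<and> N = n1 + n2 \<and> z ^ 2 < F n1 \<and> z ^ 2 < F n2"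
      using decomposition_far_from_primes[of z "32 * z ^ 2" "z ^ 2" B N] z many
      by (simp add: power2_eq_square)
  qed
qed

lemma exists_scale_below_ln:
  fixes z0 N :: nat
  assumes N: "exp (10 * (real z0 + 1) ^ 2) \<le> real N"
  shows "\<exists>z\<ge>z0. exp (10 * real z ^ 2) \<le> real N \<and> ln (real N) \<le> 20 * (real z ^ 2 + 1)"
proof -
  have "0 < real N" using N by (rule less_le_trans[OF exp_gt_zero])
  then have lnN: "10 * (real z0 + 1) ^ 2 \<le> ln (real N)"
    using N by (metis ln_exp ln_le_cancel_iff exp_gt_zero)
  define s where "s = sqrt (ln (real N) / 10)"
  have "0 \<le> ln (real N)" using lnN zero_le_power2[of "real z0 + 1"] by linarith
  then have s2: "s ^ 2 = ln (real N) / 10" and "0 \<le> s"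
    unfolding s_def by simp_all
  then have "real z0 + 1 \<le> s"
    using lnN by (simp add: real_le_rsqrt s_def)
  define z where "z = nat \<lfloor>s\<rfloor>"
  have z: "real z \<le> s" "s - 1 < real z" "z0 \<le> z"
    unfolding z_def using \<open>0 \<le> s\<close> \<open>real z0 + 1 \<le> s\<close> by linarith+
  have "exp (10 * real z ^ 2) \<le> exp (10 * s ^ 2)"
    using z(1) \<open>0 \<le> s\<close> by (simp add: power_mono)
  also have "\<dots> = real N" using s2 \<open>0 < real N\<close> by (simp add: mult.commute)
  finally have "exp (10 * real z ^ 2) \<le> real N" .
  moreover have "ln (real N) \<le> 20 * (real z ^ 2 + 1)"
  proof -
    have "(s - 1) ^ 2 \<le> real z ^ 2"
      using z(2) \<open>real z0 + 1 \<le> s\<close> by (intro power_mono) auto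
    moreover have "s ^ 2 \<le> 2 * (s - 1) ^ 2 + 2"
      using zero_le_power2[of "s - 2"] by (simp add: power2_eq_square algebra_simps)
    ultimately show ?thesis using s2 by simp
  qed
  ultimately show ?thesis using z(3) by blast
qed

theorem proposition1:
  shows "\<exists>c::real. c > 0 \<and> (\<exists>N0::nat. \<forall>N\<ge>N0. \<exists>n1 n2::nat.
           n1 > 0 \<and> n2 > 0 \<and> N = n1 + n2 \<and>
           real (F n1) \<ge> c * ln (real N) \<and> real (F n2) \<ge> c * ln (real N))"
proof -
  obtain z0 where z0: "\<forall>z\<ge>z0. \<forall>N. exp (10 * real z ^ 2) \<le> real N \<longrightarrow>
      (\<exists>n1 n2. 0 < n1 \<and> 0 < n2 \<and> N = n1 + n2 \<and> z ^ 2 < F n1 \<and> z ^ 2 < F n2)"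
    using eventually_decomposition_far_from_primes unfolding eventually_sequentially by blast
  define N0 where "N0 = nat \<lceil>exp (10 * (real z0 + 1) ^ 2)\<rceil>"
  have "\<exists>n1 n2. 0 < n1 \<and> 0 < n2 \<and> N = n1 + n2 \<and>
      1 / 20 * ln (real N) \<le> real (F n1) \<and> 1 / 20 * ln (real N) \<le> real (F n2)" if "N0 \<le> N" for N
  proof -
    have "exp (10 * (real z0 + 1) ^ 2) \<le> real N" using that unfolding N0_def by linarith
    then obtain z where z: "z0 \<le> z" "exp (10 * real z ^ 2) \<le> real N" "ln (real N) \<le> 20 * (real z ^ 2 + 1)"
      using exists_scale_below_ln by blast
    then obtain n1 n2 where "0 < n1" "0 < n2" "N = n1 + n2" "z ^ 2 < F n1" "z ^ 2 < F n2"
      using z0 by blast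
    moreover have "1 / 20 * ln (real N) \<le> real (F n)" if "z ^ 2 < F n" for n
    proof -
      have "z ^ 2 + 1 \<le> F n" using that by simp
      then have "real (z ^ 2 + 1) \<le> real (F n)" by (simp only: of_nat_le_iff)
      then show ?thesis using z(3) by simp
    qed
    ultimately show ?thesis by blast
  qed
  then show ?thesis by (intro exI[of _ "1 / 20"]) auto
qed

end
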